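(* Let $n\in\mathbb{N}$, $0<\beta\le n$, and let $B$ be a Young function with complementary Young function $\bar B$. Then there is a constant $C_\beta>0$ such that for all functions $f,g$ and all cubes $Q$, \[ \frac{1}{\ell(Q)^\beta}\int_Q|fg|\,d\mathcal{H}^\beta_\infty\le C_\beta\|f\|_{B,Q,\mathcal{H}^\beta_\infty}\|g\|_{\bar B,Q,\mathcal{H}^\beta_\infty}. \]
   Context: $\mathcal{H}^\beta_\infty(E)=\inf\{\sum_i\omega_\beta r_i^\beta:E\subset\bigcup_iB(x_i,r_i)\}$, $\omega_\beta=\pi^{\beta/2}/\Gamma(\beta/2+1)$; integrals against $\mathcal{H}^\beta_\infty$ are Choquet integrals $\int_\Omega h\,d\mathcal{H}^\beta_\infty=\int_0^\infty\mathcal{H}^\beta_\infty(\{x\in\Omega:h>t\})\,dt$. Cubes are axis-parallel with side length $\ell(Q)$. A Young function $B:[0,\infty)\to[0,\infty)$ is continuous, convex, strictly increasing, with $B(0)=0$ and $B(t)\to\infty$ as $t\to\infty$; its complementary function is $\bar B(t)=\sup_{s>0}\{st-B(s)\}$. The mean Luxemburg quasinorm is $\|f\|_{B,Q,\mathcal{H}^\beta_\infty}=\inf\{\lambda>0:\ell(Q)^{-\beta}\int_QB(|f|/\lambda)\,d\mathcal{H}^\beta_\infty\le1\}$. *)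

theory Defs
  imports "HOL-Analysis.Analysis"
begin

definition omega :: "real \<Rightarrow> real" where
  "omega \<beta> = pi powr (\<beta> / 2) / Gamma (\<beta> / 2 + 1)"

definition hcontent :: "real \<Rightarrow> 'a::euclidean_space set \<Rightarrow> ennreal" where
  "hcontent \<beta> E =
     (INF xr \<in> {(x :: nat \<Rightarrow> 'a, r :: nat \<Rightarrow> real).
                   (\<forall>i. 0 \<le> r i) \<and> E \<subseteq> (\<Union>i. ball (x i) (r i))}.
        (\<Sum>i. ennreal (omega \<beta> * (snd xr i) powr \<beta>)))"

definition choquet :: "real \<Rightarrow> 'a::euclidean_space set \<Rightarrow> ('a \<Rightarrow> ennreal) \<Rightarrow> ennreal" where
  "choquet \<beta> \<Omega> h = (\<integral>\<^sup>+ t. hcontent \<beta> {x \<in> \<Omega>. ennreal t < h x} * indicator {0..} t \<partial>lborel)"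

definition cube :: "'a::euclidean_space \<Rightarrow> real \<Rightarrow> 'a set" where
  "cube a l = cbox a (a + l *\<^sub>R One)"

definition young :: "(real \<Rightarrow> real) \<Rightarrow> bool" where
  "young B \<longleftrightarrow> continuous_on {0..} B \<and> convex_on {0..} B \<and> strict_mono_on {0..} B
     \<and> B 0 = 0 \<and> filterlim B at_top at_top"

definition compl_young :: "(real \<Rightarrow> real) \<Rightarrow> real \<Rightarrow> ennreal" where
  "compl_young B t = (SUP s \<in> {0<..}. ennreal (s * t - B s))"

text \<open>Mean Luxemburg quasinorm over the cube of corner a and side l (value +oo if no lambda works).\<close>
definition luxnorm :: "(real \<Rightarrow> ennreal) \<Rightarrow> real \<Rightarrow> 'a::euclidean_space \<Rightarrow> real \<Rightarrow> ('a \<Rightarrow> real) \<Rightarrow> ennreal" where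
  "luxnorm \<Phi> \<beta> a l f = (INF s \<in> {s::real. 0 < s \<and>
       ennreal (l powr (-\<beta>)) * choquet \<beta> (cube a l) (\<lambda>x. \<Phi> (\<bar>f x\<bar> / s)) \<le> 1}. ennreal s)"

end

theory Submission
  imports Defs
begin

text \<open>
  If \<open>\<lambda>\<close> and \<open>\<mu>\<close> are admissible in the Luxemburg norms of \<open>f\<close> and \<open>g\<close>, Young's inequality
  \<open>st \<le> B(s) + B\<^sup>*(t)\<close> at \<open>s = |f|/\<lambda>\<close>, \<open>t = |g|/\<mu>\<close> gives
  \<open>|fg| \<le> \<lambda>\<mu> (B(|f|/\<lambda>) + B\<^sup>*(|g|/\<mu>))\<close> pointwise.  The Choquet integral is monotone,
  positively homogeneous and, because Hausdorff content is subadditive and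
  \<open>{h\<^sub>1 + h\<^sub>2 > t} \<subseteq> {h\<^sub>1 > t/2} \<union> {h\<^sub>2 > t/2}\<close>, subadditive up to the factor 2.
  Hence the normalised integral of \<open>|fg|\<close> is at most \<open>2\<lambda>\<mu>(1 + 1) = 4\<lambda>\<mu>\<close>, and taking
  infima over \<open>\<lambda>\<close> and \<open>\<mu>\<close> gives the claim with \<open>C = 4\<close>, for every \<open>\<beta>\<close>.  Since \<open>0 \<cdot> \<infinity> = 0\<close> in \<open>ennreal\<close>, a vanishing norm
  has to be treated separately: it forces the function to vanish outside a set of zero
  content, and then the left-hand side is 0.
\<close>

lemma ennreal_eq_0_if_mult_bounded:
  fixes x c :: ennreal
  assumes "c \<noteq> top" and "\<And>M. 0 < M \<Longrightarrow> ennreal M * x \<le> c"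
  shows "x = 0"
proof (rule ccontr)
  assume "x \<noteq> 0"
  obtain c' where c': "c = ennreal c'" "0 \<le> c'"
    using assms(1) by (cases c) auto
  show False
  proof (cases x)
    case (real r)
    with \<open>x \<noteq> 0\<close> have "0 < r" by auto
    have "ennreal ((c' + 1) / r * r) \<le> ennreal c'"
      using assms(2)[of "(c' + 1) / r"] \<open>0 < r\<close> c' real by (simp flip: ennreal_mult)
    then show False
      using \<open>0 < r\<close> c' by (simp add: ennreal_le_iff)
  next
    case top
    then show False
      using assms(1) assms(2)[of 1] by (simp add: top_unique)
  qed
qed

lemma le_mult_INF_ennreal:
  fixes X c :: ennreal
  assumes "c \<noteq> 0" and "(INF t\<in>T. g t) \<noteq> 0" and "\<And>t. t \<in> T \<Longrightarrow> X \<le> c * g t"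
  shows "X \<le> c * (INF t\<in>T. g t)"
proof (cases "c = top")
  case True
  then show ?thesis using assms(2) by simp
next
  case False
  have "X / c \<le> (INF t\<in>T. g t)"
    using assms by (intro INF_greatest divide_le_posI_ennreal) (auto simp: zero_less_iff_neq_zero)
  then have "c * (X / c) \<le> c * (INF t\<in>T. g t)"
    by (rule mult_left_mono) simp
  then show ?thesis
    using False assms(1) by (metis ennreal_times_divide mult.commute mult_divide_eq_ennreal)
qed

lemma le_mult_INF_mult_INF_ennreal:
  fixes X c :: ennreal
  assumes c: "c \<noteq> 0" and S: "(INF s\<in>S. f s) \<noteq> 0" and T: "(INF t\<in>T. g t) \<noteq> 0"
    and le: "\<And>s t. s \<in> S \<Longrightarrow> t \<in> T \<Longrightarrow> X \<le> c * f s * g t"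
  shows "X \<le> c * (INF s\<in>S. f s) * (INF t\<in>T. g t)"
proof -
  have "X \<le> (c * f s) * (INF t\<in>T. g t)" if "s \<in> S" for s
  proof (rule le_mult_INF_ennreal)
    have "(INF s\<in>S. f s) \<le> f s"
      using that by (rule INF_lower)
    then show "c * f s \<noteq> 0"
      using c S by auto
  qed (use T le that in auto)
  then have "X \<le> (c * (INF t\<in>T. g t)) * (INF s\<in>S. f s)"
    using c S T by (intro le_mult_INF_ennreal) (auto simp: mult_ac)
  then show ?thesis
    by (simp add: mult_ac)
qed

lemma borel_measurable_antimono_ennreal:
  fixes F :: "real \<Rightarrow> ennreal"
  assumes "antimono F"
  shows "F \<in> borel_measurable borel"
proof (rule borel_measurableI_greater)
  fix y
  have "is_interval {x. y < F x}"
    using assms unfolding is_interval_1 by (auto intro: less_le_trans dest: antimonoD)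
  then show "{x \<in> space borel. y < F x} \<in> sets borel"
    by (simp add: real_interval_borel_measurable)
qed

lemma nn_integral_nonneg_dilate:
  fixes F :: "real \<Rightarrow> ennreal"
  assumes [measurable]: "F \<in> borel_measurable borel" and d: "0 < d"
  shows "(\<integral>\<^sup>+ t. F (t / d) * indicator {0..} t \<partial>lborel)
       = ennreal d * (\<integral>\<^sup>+ t. F t * indicator {0..} t \<partial>lborel)"
proof -
  have m: "(\<lambda>t. F (t / d) * indicator {0..} t) \<in> borel_measurable borel"
    by measurable
  have "(\<integral>\<^sup>+ t. F (t / d) * indicator {0..} t \<partial>lborel)
      = ennreal \<bar>d\<bar> * (\<integral>\<^sup>+ t. F ((0 + d * t) / d) * indicator {0..} (0 + d * t) \<partial>lborel)"
    by (rule nn_integral_real_affine[OF m]) (use d in auto)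
  also have "(\<lambda>t. F ((0 + d * t) / d) * indicator {0..} (0 + d * t)) = (\<lambda>t. F t * indicator {0..} t)"
    using d by (auto simp: fun_eq_iff indicator_def zero_le_mult_iff)
  finally show ?thesis
    using d by simp
qed

lemma hcontent_mono: "A \<subseteq> B \<Longrightarrow> hcontent \<beta> A \<le> hcontent \<beta> B"
  unfolding hcontent_def by (rule INF_superset_mono) auto

lemma hcontent_empty [simp]: "hcontent \<beta> {} = 0"
proof -
  have "hcontent \<beta> ({}::'a::euclidean_space set) \<le> 0"
    unfolding hcontent_def by (rule INF_lower2[of "(\<lambda>_. 0, \<lambda>_. 0)"]) auto
  then show ?thesis by simp
qed

lemma hcontent_subadditive_countably:
  fixes A :: "nat \<Rightarrow> 'a::euclidean_space set"
  shows "hcontent \<beta> (\<Union>k. A k) \<le> (\<Sum>k. hcontent \<beta> (A k))"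
proof (rule ennreal_le_epsilon)
  fix e :: real
  assume fin: "(\<Sum>k. hcontent \<beta> (A k)) < top" and e: "0 < e"
  define covers where "covers E = {(x :: nat \<Rightarrow> 'a, r :: nat \<Rightarrow> real).
      (\<forall>i. 0 \<le> r i) \<and> E \<subseteq> (\<Union>i. ball (x i) (r i))}" for E
  define cost where "cost xr = (\<Sum>i. ennreal (omega \<beta> * snd xr i powr \<beta>))"
    for xr :: "(nat \<Rightarrow> 'a) \<times> (nat \<Rightarrow> real)"
  have hc: "hcontent \<beta> E = (INF xr\<in>covers E. cost xr)" for E
    unfolding hcontent_def covers_def cost_def by simp
  have "\<exists>p\<in>covers (A k). cost p < hcontent \<beta> (A k) + ennreal (e * (1/2)^Suc k)" for k
    using ennreal_suminf_lessD[OF fin, of k] e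
    by (intro INF_approx_ennreal[OF _ hc]) auto
  then obtain P where P: "\<And>k. P k \<in> covers (A k)"
    "\<And>k. cost (P k) < hcontent \<beta> (A k) + ennreal (e * (1/2)^Suc k)"
    by metis
  \<comment> \<open>Interleave the chosen covers of all \<open>A k\<close> into one cover via the pairing bijection.\<close>
  define X where "X n = fst (P (fst (prod_decode n))) (snd (prod_decode n))" for n
  define R where "R n = snd (P (fst (prod_decode n))) (snd (prod_decode n))" for n
  have "(X, R) \<in> covers (\<Union>k. A k)"
  proof -
    have "0 \<le> R n" for n
      using P(1)[of "fst (prod_decode n)"] by (auto simp: covers_def R_def)
    moreover have "y \<in> (\<Union>i. ball (X i) (R i))" if "y \<in> A k" for y k
    proof -
      obtain i where "y \<in> ball (fst (P k) i) (snd (P k) i)"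
        using P(1)[of k] \<open>y \<in> A k\<close> by (auto simp: covers_def split: prod.splits)
      then have "y \<in> ball (X (prod_encode (k, i))) (R (prod_encode (k, i)))"
        by (simp add: X_def R_def)
      then show ?thesis by blast
    qed
    ultimately show ?thesis by (auto simp: covers_def)
  qed
  then have "hcontent \<beta> (\<Union>k. A k) \<le> cost (X, R)"
    unfolding hc by (rule INF_lower)
  also have "cost (X, R) = (\<Sum>n. (\<lambda>(k, j). ennreal (omega \<beta> * snd (P k) j powr \<beta>)) (prod_decode n))"
    by (simp add: cost_def R_def case_prod_beta)
  also have "\<dots> = (\<Sum>k. cost (P k))"
    by (rule suminf_ennreal_2dimen) (simp add: cost_def)
  also have "\<dots> \<le> (\<Sum>k. hcontent \<beta> (A k) + ennreal (e * (1/2)^Suc k))"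
    using P(2) by (intro suminf_le) (auto intro: less_imp_le)
  also have "\<dots> = (\<Sum>k. hcontent \<beta> (A k)) + (\<Sum>k. ennreal (e * (1/2)^Suc k))"
    by (rule suminf_add[symmetric]) auto
  also have "(\<Sum>k. ennreal (e * (1/2)^Suc k)) = ennreal e"
  proof -
    have "(\<lambda>k. e * (1/2::real)^Suc k) sums (e * 1)"
      by (intro sums_mult power_half_series)
    then show ?thesis
      using e by (subst suminf_ennreal2) (auto simp: sums_iff)
  qed
  finally show "hcontent \<beta> (\<Union>k. A k) \<le> (\<Sum>k. hcontent \<beta> (A k)) + ennreal e" .
qed

lemma hcontent_subadditive: "hcontent \<beta> (A \<union> B) \<le> hcontent \<beta> A + hcontent \<beta> B"
proof -
  define F where "F k = (if k = 0 then A else if k = 1 then B else {})" for k :: nat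
  have union: "A \<union> B = (\<Union>k. F k)"
    by (auto simp: F_def split: if_splits)
  have "hcontent \<beta> (A \<union> B) \<le> (\<Sum>k. hcontent \<beta> (F k))"
    unfolding union by (rule hcontent_subadditive_countably)
  also have "\<dots> = (\<Sum>k<2. hcontent \<beta> (F k))"
    by (rule suminf_finite) (auto simp: F_def)
  also have "\<dots> = hcontent \<beta> A + hcontent \<beta> B"
    by (simp add: F_def numeral_2_eq_2)
  finally show ?thesis .
qed

lemma hcontent_eq_0_if_superlevels_eq_0:
  assumes "\<And>\<epsilon>. 0 < \<epsilon> \<Longrightarrow> hcontent \<beta> {x \<in> \<Omega>. \<epsilon> < \<bar>g x\<bar>} = 0"
  shows "hcontent \<beta> {x \<in> \<Omega>. g x \<noteq> (0::real)} = 0"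
proof -
  have support: "{x \<in> \<Omega>. g x \<noteq> 0} = (\<Union>k. {x \<in> \<Omega>. 1 / Suc k < \<bar>g x\<bar>})"
  proof safe
    fix x assume "x \<in> \<Omega>" "g x \<noteq> 0"
    then have "0 < \<bar>g x\<bar>" by simp
    then obtain k :: nat where "1 / Suc k < \<bar>g x\<bar>"
      by (rule nat_approx_posE)
    with \<open>x \<in> \<Omega>\<close> show "x \<in> (\<Union>k. {x \<in> \<Omega>. 1 / Suc k < \<bar>g x\<bar>})" by blast
  next
    fix x k assume "1 / real (Suc k) < \<bar>g x\<bar>" "g x = 0"
    then show False by simp
  qed
  have "hcontent \<beta> {x \<in> \<Omega>. g x \<noteq> 0} \<le> (\<Sum>k. hcontent \<beta> {x \<in> \<Omega>. 1 / Suc k < \<bar>g x\<bar>})"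
    unfolding support by (rule hcontent_subadditive_countably)
  also have "\<dots> = 0"
    by (simp add: assms)
  finally show ?thesis by simp
qed

lemma antimono_hcontent_superlevel: "antimono (\<lambda>t. hcontent \<beta> {x \<in> \<Omega>. ennreal t < h x})"
  by (intro antimonoI hcontent_mono) (auto intro: le_less_trans[OF ennreal_leI])

lemma choquet_dilate:
  assumes "0 < d"
  shows "(\<integral>\<^sup>+ t. hcontent \<beta> {x \<in> \<Omega>. ennreal (t / d) < h x} * indicator {0..} t \<partial>lborel)
       = ennreal d * choquet \<beta> \<Omega> h"
  unfolding choquet_def
  by (intro nn_integral_nonneg_dilate borel_measurable_antimono_ennreal
      antimono_hcontent_superlevel assms)

lemma choquet_mono:
  assumes "\<And>x. x \<in> \<Omega> \<Longrightarrow> h x \<le> h' x"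
  shows "choquet \<beta> \<Omega> h \<le> choquet \<beta> \<Omega> h'"
  unfolding choquet_def
proof (intro nn_integral_mono mult_right_mono hcontent_mono)
  show "{x \<in> \<Omega>. ennreal t < h x} \<subseteq> {x \<in> \<Omega>. ennreal t < h' x}" for t
    using assms by (auto intro: less_le_trans)
qed simp

lemma choquet_cmult:
  assumes c: "0 < c"
  shows "choquet \<beta> \<Omega> (\<lambda>x. ennreal c * h x) = ennreal c * choquet \<beta> \<Omega> h"
proof -
  have "ennreal t < ennreal c * h x \<longleftrightarrow> ennreal (t / c) < h x" if "0 \<le> t" for t x
  proof -
    have "ennreal t = ennreal c * ennreal (t / c)"
      using c that by (simp flip: ennreal_mult)
    then show ?thesis
      using c by (simp add: ennreal_mult_le_mult_iff flip: not_le)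
  qed
  then have "hcontent \<beta> {x \<in> \<Omega>. ennreal t < ennreal c * h x} * indicator {0..} t
      = hcontent \<beta> {x \<in> \<Omega>. ennreal (t / c) < h x} * indicator {0..} t" for t
    by (cases "0 \<le> t") simp_all
  then show ?thesis
    unfolding choquet_def[of _ _ "\<lambda>x. ennreal c * h x"] choquet_dilate[OF c, symmetric] by simp
qed

lemma choquet_add_le:
  "choquet \<beta> \<Omega> (\<lambda>x. h\<^sub>1 x + h\<^sub>2 x) \<le> 2 * (choquet \<beta> \<Omega> h\<^sub>1 + choquet \<beta> \<Omega> h\<^sub>2)"
proof -
  define F where "F h t = hcontent \<beta> {x \<in> \<Omega>. ennreal t < h x}" for h t
  have F_measurable: "(\<lambda>t. F h (t / 2)) \<in> borel_measurable borel" for h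
    unfolding F_def
    by (intro measurable_compose[OF _ borel_measurable_antimono_ennreal]
        antimono_hcontent_superlevel) simp
  have split: "F (\<lambda>x. h\<^sub>1 x + h\<^sub>2 x) t \<le> F h\<^sub>1 (t / 2) + F h\<^sub>2 (t / 2)" if "0 \<le> t" for t
  proof -
    have "{x \<in> \<Omega>. ennreal t < h\<^sub>1 x + h\<^sub>2 x}
        \<subseteq> {x \<in> \<Omega>. ennreal (t / 2) < h\<^sub>1 x} \<union> {x \<in> \<Omega>. ennreal (t / 2) < h\<^sub>2 x}"
    proof (rule subsetI, rule ccontr)
      fix x assume x: "x \<in> {x \<in> \<Omega>. ennreal t < h\<^sub>1 x + h\<^sub>2 x}"
        "x \<notin> {x \<in> \<Omega>. ennreal (t / 2) < h\<^sub>1 x} \<union> {x \<in> \<Omega>. ennreal (t / 2) < h\<^sub>2 x}"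
      then have "h\<^sub>1 x + h\<^sub>2 x \<le> ennreal (t / 2) + ennreal (t / 2)"
        by (intro add_mono) auto
      also have "\<dots> = ennreal t"
        using that by (simp flip: ennreal_plus)
      finally show False using x by (auto dest: leD)
    qed
    then show ?thesis
      unfolding F_def by (meson hcontent_subadditive hcontent_mono order_trans)
  qed
  have "choquet \<beta> \<Omega> (\<lambda>x. h\<^sub>1 x + h\<^sub>2 x) = (\<integral>\<^sup>+ t. F (\<lambda>x. h\<^sub>1 x + h\<^sub>2 x) t * indicator {0..} t \<partial>lborel)"
    unfolding choquet_def F_def ..
  also have "\<dots> \<le> (\<integral>\<^sup>+ t. F h\<^sub>1 (t / 2) * indicator {0..} t + F h\<^sub>2 (t / 2) * indicator {0..} t \<partial>lborel)"
    using split by (intro nn_integral_mono) (simp add: indicator_def distrib_right)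
  also have "\<dots> = (\<integral>\<^sup>+ t. F h\<^sub>1 (t / 2) * indicator {0..} t \<partial>lborel)
      + (\<integral>\<^sup>+ t. F h\<^sub>2 (t / 2) * indicator {0..} t \<partial>lborel)"
    using F_measurable by (intro nn_integral_add) auto
  also have "\<dots> = 2 * choquet \<beta> \<Omega> h\<^sub>1 + 2 * choquet \<beta> \<Omega> h\<^sub>2"
    using choquet_dilate[of 2 \<beta> \<Omega> h\<^sub>1] choquet_dilate[of 2 \<beta> \<Omega> h\<^sub>2] by (simp add: F_def)
  finally show ?thesis by (simp add: distrib_left)
qed

lemma choquet_Markov_inequality:
  assumes "A \<subseteq> \<Omega>" and "0 \<le> t" and "\<And>x. x \<in> A \<Longrightarrow> ennreal t \<le> h x"
  shows "ennreal t * hcontent \<beta> A \<le> choquet \<beta> \<Omega> h"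
proof -
  have "ennreal t * hcontent \<beta> A = (\<integral>\<^sup>+ s. hcontent \<beta> A * indicator {0..<t} s \<partial>lborel)"
    using assms(2) by (simp add: nn_integral_cmult_indicator mult.commute)
  also have "\<dots> \<le> choquet \<beta> \<Omega> h"
    unfolding choquet_def
  proof (rule nn_integral_mono)
    fix s
    have "A \<subseteq> {x \<in> \<Omega>. ennreal s < h x}" if "0 \<le> s" "s < t"
    proof -
      have "ennreal s < ennreal t"
        using that by (simp add: ennreal_lessI)
      then show ?thesis
        using assms by (auto intro: less_le_trans)
    qed
    then show "hcontent \<beta> A * indicator {0..<t} s \<le> hcontent \<beta> {x \<in> \<Omega>. ennreal s < h x} * indicator {0..} s"
      by (cases "0 \<le> s \<and> s < t") (auto intro: hcontent_mono)
  qed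
  finally show ?thesis .
qed

lemma choquet_eq_0_if_support_null:
  assumes "hcontent \<beta> {x \<in> \<Omega>. h x \<noteq> 0} = 0"
  shows "choquet \<beta> \<Omega> h = 0"
proof -
  have "hcontent \<beta> {x \<in> \<Omega>. ennreal t < h x} \<le> hcontent \<beta> {x \<in> \<Omega>. h x \<noteq> 0}" for t
    by (rule hcontent_mono) auto
  then show ?thesis
    using assms by (simp add: choquet_def)
qed

lemma young_nonneg: "young B \<Longrightarrow> 0 \<le> a \<Longrightarrow> 0 \<le> B a"
  unfolding young_def by (metis atLeast_iff order_refl strict_mono_on_leD)

lemma young_inequality:
  assumes B: "young B" and "0 \<le> a" and "0 \<le> b"
  shows "ennreal (a * b) \<le> ennreal (B a) + compl_young B b"
proof (cases "a = 0")
  case False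
  then have "ennreal (a * b - B a) \<le> compl_young B b"
    unfolding compl_young_def using \<open>0 \<le> a\<close> by (intro SUP_upper2[of a]) auto
  moreover have "ennreal (a * b) \<le> ennreal (B a) + ennreal (a * b - B a)"
    using young_nonneg[OF B \<open>0 \<le> a\<close>]
    by (cases "B a \<le> a * b") (auto simp: ennreal_leI add_increasing2 simp flip: ennreal_plus)
  ultimately show ?thesis
    by (meson add_left_mono order_trans)
qed simp

lemma young_inequality_scaled:
  assumes "young B" and "0 < s" and "0 < t"
  shows "ennreal \<bar>u * v\<bar>
    \<le> ennreal (s * t) * (ennreal (B (\<bar>u\<bar> / s)) + compl_young B (\<bar>v\<bar> / t))"
proof -
  have "ennreal \<bar>u * v\<bar> = ennreal (s * t) * ennreal ((\<bar>u\<bar> / s) * (\<bar>v\<bar> / t))"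
    using assms by (simp add: abs_mult flip: ennreal_mult)
  also have "\<dots> \<le> ennreal (s * t) * (ennreal (B (\<bar>u\<bar> / s)) + compl_young B (\<bar>v\<bar> / t))"
    using assms by (intro mult_left_mono young_inequality) auto
  finally show ?thesis .
qed

lemma young_tendsto_top: "young B \<Longrightarrow> ((\<lambda>t. ennreal (B t)) \<longlongrightarrow> top) at_top"
  unfolding young_def ennreal_tendsto_top_eq_at_top by simp

lemma compl_young_tendsto_top: "(compl_young B \<longlongrightarrow> top) at_top"
  unfolding tendsto_top_iff_ennreal eventually_at_top_linorder
proof (intro allI impI exI)
  fix r t :: real assume "0 \<le> r" and t: "r + B 1 + 1 \<le> t"
  then have "ennreal r < ennreal (1 * t - B 1)"
    by (simp add: ennreal_lessI)
  also have "\<dots> \<le> compl_young B t"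
    unfolding compl_young_def by (intro SUP_upper) auto
  finally show "ennreal r < compl_young B t" .
qed

lemma hcontent_support_eq_0_if_luxnorm_eq_0:
  assumes \<Phi>: "(\<Phi> \<longlongrightarrow> top) at_top" and l: "0 < l" and zero: "luxnorm \<Phi> \<beta> a l g = 0"
  shows "hcontent \<beta> {x \<in> cube a l. g x \<noteq> 0} = 0"
proof (rule hcontent_eq_0_if_superlevels_eq_0)
  fix \<epsilon> :: real assume "0 < \<epsilon>"
  show "hcontent \<beta> {x \<in> cube a l. \<epsilon> < \<bar>g x\<bar>} = 0"
  proof (rule ennreal_eq_0_if_mult_bounded)
    show "ennreal (l powr \<beta>) \<noteq> top" by simp
    fix M :: real assume "0 < M"
    obtain T where T: "0 < T" "\<And>t. T \<le> t \<Longrightarrow> ennreal M < \<Phi> t"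
    proof -
      obtain T0 where "\<And>t. T0 \<le> t \<Longrightarrow> ennreal M < \<Phi> t"
        using order_tendstoD(1)[OF \<Phi>, of "ennreal M"] by (auto simp: eventually_at_top_linorder)
      then show thesis
        by (intro that[of "max T0 1"]) auto
    qed
    have "luxnorm \<Phi> \<beta> a l g < ennreal (\<epsilon> / T)"
      using zero \<open>0 < \<epsilon>\<close> T(1) by simp
    then obtain t where t: "0 < t" "t < \<epsilon> / T"
      and admissible: "ennreal (l powr -\<beta>) * choquet \<beta> (cube a l) (\<lambda>x. \<Phi> (\<bar>g x\<bar> / t)) \<le> 1"
      unfolding luxnorm_def by (auto simp: INF_less_iff ennreal_less_iff)
    have "ennreal M * hcontent \<beta> {x \<in> cube a l. \<epsilon> < \<bar>g x\<bar>}
        \<le> choquet \<beta> (cube a l) (\<lambda>x. \<Phi> (\<bar>g x\<bar> / t))"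
    proof (rule choquet_Markov_inequality)
      fix x assume "x \<in> {x \<in> cube a l. \<epsilon> < \<bar>g x\<bar>}"
      then have "T < \<bar>g x\<bar> / t"
        using t T(1) by (simp add: field_simps)
      then show "ennreal M \<le> \<Phi> (\<bar>g x\<bar> / t)"
        using T(2) by (simp add: less_imp_le)
    qed (use \<open>0 < M\<close> in auto)
    also have "\<dots> \<le> ennreal (l powr \<beta>)"
    proof -
      have "ennreal (l powr \<beta>) * ennreal (l powr -\<beta>) = 1"
        using l by (simp add: powr_minus flip: ennreal_mult)
      then have "choquet \<beta> (cube a l) (\<lambda>x. \<Phi> (\<bar>g x\<bar> / t))
          = ennreal (l powr \<beta>) * (ennreal (l powr -\<beta>) * choquet \<beta> (cube a l) (\<lambda>x. \<Phi> (\<bar>g x\<bar> / t)))"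
        by (simp add: mult.assoc[symmetric])
      also have "\<dots> \<le> ennreal (l powr \<beta>)"
        using mult_left_mono[OF admissible, of "ennreal (l powr \<beta>)"] by simp
      finally show ?thesis .
    qed
    finally show "ennreal M * hcontent \<beta> {x \<in> cube a l. \<epsilon> < \<bar>g x\<bar>} \<le> ennreal (l powr \<beta>)" .
  qed
qed

lemma choquet_abs_mult_le:
  assumes "young B" and "0 < s" and "0 < t"
    and f: "L * choquet \<beta> \<Omega> (\<lambda>x. ennreal (B (\<bar>f x\<bar> / s))) \<le> 1"
    and g: "L * choquet \<beta> \<Omega> (\<lambda>x. compl_young B (\<bar>g x\<bar> / t)) \<le> 1"
  shows "L * choquet \<beta> \<Omega> (\<lambda>x. ennreal \<bar>f x * g x\<bar>) \<le> 4 * ennreal s * ennreal t"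
proof -
  let ?F = "\<lambda>x. ennreal (B (\<bar>f x\<bar> / s))" and ?G = "\<lambda>x. compl_young B (\<bar>g x\<bar> / t)"
  have "choquet \<beta> \<Omega> (\<lambda>x. ennreal \<bar>f x * g x\<bar>)
      \<le> choquet \<beta> \<Omega> (\<lambda>x. ennreal (s * t) * (?F x + ?G x))"
    using assms(1-3) by (intro choquet_mono young_inequality_scaled)
  also have "\<dots> = ennreal (s * t) * choquet \<beta> \<Omega> (\<lambda>x. ?F x + ?G x)"
    using assms(2,3) by (intro choquet_cmult) simp
  also have "\<dots> \<le> ennreal (s * t) * (2 * (choquet \<beta> \<Omega> ?F + choquet \<beta> \<Omega> ?G))"
    by (intro mult_left_mono choquet_add_le) simp
  finally have "L * choquet \<beta> \<Omega> (\<lambda>x. ennreal \<bar>f x * g x\<bar>)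
      \<le> 2 * ennreal (s * t) * (L * choquet \<beta> \<Omega> ?F + L * choquet \<beta> \<Omega> ?G)"
    by (rule mult_left_mono[THEN order_trans]) (simp_all add: algebra_simps)
  also have "\<dots> \<le> 2 * ennreal (s * t) * (1 + 1)"
    by (intro mult_left_mono add_mono f g) simp
  finally show ?thesis
    using assms(2,3) by (simp add: ennreal_mult mult_ac)
qed

lemma luxnorm_Hoelder_inequality:
  fixes f g :: "'a::euclidean_space \<Rightarrow> real"
  assumes B: "young B" and l: "0 < l"
  shows "ennreal (l powr -\<beta>) * choquet \<beta> (cube a l) (\<lambda>x. ennreal \<bar>f x * g x\<bar>)
    \<le> 4 * luxnorm (\<lambda>t. ennreal (B t)) \<beta> a l f * luxnorm (compl_young B) \<beta> a l g"
    (is "?lhs \<le> _")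
proof (cases "luxnorm (\<lambda>t. ennreal (B t)) \<beta> a l f = 0 \<or> luxnorm (compl_young B) \<beta> a l g = 0")
  case True
  let ?Q = "cube a l"
  have "hcontent \<beta> {x \<in> ?Q. f x \<noteq> 0} = 0 \<or> hcontent \<beta> {x \<in> ?Q. g x \<noteq> 0} = 0"
    using True hcontent_support_eq_0_if_luxnorm_eq_0[OF young_tendsto_top[OF B] l]
      hcontent_support_eq_0_if_luxnorm_eq_0[OF compl_young_tendsto_top l] by blast
  moreover have "hcontent \<beta> {x \<in> ?Q. ennreal \<bar>f x * g x\<bar> \<noteq> 0} \<le> hcontent \<beta> {x \<in> ?Q. f x \<noteq> 0}"
    and "hcontent \<beta> {x \<in> ?Q. ennreal \<bar>f x * g x\<bar> \<noteq> 0} \<le> hcontent \<beta> {x \<in> ?Q. g x \<noteq> 0}"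
    by (auto intro: hcontent_mono)
  ultimately have "hcontent \<beta> {x \<in> ?Q. ennreal \<bar>f x * g x\<bar> \<noteq> 0} = 0"
    by auto
  then show ?thesis
    by (simp add: choquet_eq_0_if_support_null)
next
  case False
  show ?thesis
    unfolding luxnorm_def
  proof (rule le_mult_INF_mult_INF_ennreal)
    fix s t
    assume "s \<in> {s. 0 < s \<and> ennreal (l powr -\<beta>) * choquet \<beta> (cube a l) (\<lambda>x. ennreal (B (\<bar>f x\<bar> / s))) \<le> 1}"
      and "t \<in> {t. 0 < t \<and> ennreal (l powr -\<beta>) * choquet \<beta> (cube a l) (\<lambda>x. compl_young B (\<bar>g x\<bar> / t)) \<le> 1}"
    then show "?lhs \<le> 4 * ennreal s * ennreal t"
      by (intro choquet_abs_mult_le[OF B]) auto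
  qed (use False in \<open>simp_all add: luxnorm_def\<close>)
qed

theorem lemma3p3:
  fixes \<beta> :: real
  assumes "0 < \<beta>" and "\<beta> \<le> real DIM('a::euclidean_space)"
  shows "\<exists>C>0. \<forall>B. young B \<longrightarrow>
           (\<forall>(f::'a \<Rightarrow> real) g a l. 0 < l \<longrightarrow>
              ennreal (l powr (-\<beta>)) * choquet \<beta> (cube a l) (\<lambda>x. ennreal \<bar>f x * g x\<bar>)
              \<le> ennreal C * luxnorm (\<lambda>t. ennreal (B t)) \<beta> a l f
                  * luxnorm (compl_young B) \<beta> a l g)"
proof (intro exI[of _ 4] conjI allI impI)
  fix B :: "real \<Rightarrow> real" and f g :: "'a \<Rightarrow> real" and a :: 'a and l :: real
  assume "young B" and "0 < l"
  then show "ennreal (l powr -\<beta>) * choquet \<beta> (cube a l) (\<lambda>x. ennreal \<bar>f x * g x\<bar>)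
      \<le> ennreal 4 * luxnorm (\<lambda>t. ennreal (B t)) \<beta> a l f * luxnorm (compl_young B) \<beta> a l g"
    using luxnorm_Hoelder_inequality by simp
qed simp

end
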